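(* Let $k\ge3$ and let $G,H$ be $2$-connected graphs of minimum degree at least $3$ that are not $3$-connected. For vertices $v\in V(G_\perp)$ and $w\in V(H)\setminus V(H_\perp)$ we have $\chi^k_G(v)\ne\chi^k_H(w)$.
   Context: Graphs are finite, simple, undirected (possibly colored). A graph is $k$-connected if it has more than $k$ vertices and removing fewer than $k$ vertices leaves it connected. A separator of $G$ is a set $S$ with $G-S$ disconnected. $P(G)$ is the set of pairs $(S,K)$ with $S$ a separator of minimum cardinality and $K$ the vertex set of a connected component of $G-S$, partially ordered by $(S,K)\le(S',K')$ iff $K\subseteq K'$; $P_0(G)$ is the set of minimal elements; $V(G_\perp):=V(G)\setminus\bigcup_{(S,K)\in P_0(G)}K$. For $k\ge2$, the $k$-dimensional Weisfeiler–Leman algorithm computes a coloring of $V(G)^k$: the initial color of a tuple consists of its input color and the isomorphism type of the ordered induced subgraph on its entries; in each round the new color of $\bar v$ is the pair of its old color and the multiset, over $w\in V(G)$, of the $k$-tuples whose $i$-th component is the old color of $\bar v$ with its $i$-th entry replaced by $w$; the stable coloring is $\chi^k_G$, with canonical colors comparable across graphs. $\chi^k_G(v):=\chi^k_G(v,\dots,v)$. *)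

theory Defs
  imports Main "HOL-Library.Multiset"
begin

definition graph :: "'a set \<Rightarrow> ('a \<Rightarrow> 'a \<Rightarrow> bool) \<Rightarrow> bool" where
  "graph V E \<longleftrightarrow> finite V \<and> (\<forall>u v. E u v \<longrightarrow> u \<in> V \<and> v \<in> V)
      \<and> (\<forall>u v. E u v \<longrightarrow> E v u) \<and> (\<forall>v. \<not> E v v)"

definition reach :: "('a \<Rightarrow> 'a \<Rightarrow> bool) \<Rightarrow> 'a set \<Rightarrow> 'a \<Rightarrow> 'a \<Rightarrow> bool" where
  "reach E X = (\<lambda>x y. E x y \<and> x \<in> X \<and> y \<in> X)\<^sup>*\<^sup>*"

definition connected_on :: "('a \<Rightarrow> 'a \<Rightarrow> bool) \<Rightarrow> 'a set \<Rightarrow> bool" where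
  "connected_on E X \<longleftrightarrow> X \<noteq> {} \<and> (\<forall>u\<in>X. \<forall>v\<in>X. reach E X u v)"

definition k_connected :: "'a set \<Rightarrow> ('a \<Rightarrow> 'a \<Rightarrow> bool) \<Rightarrow> nat \<Rightarrow> bool" where
  "k_connected V E k \<longleftrightarrow> card V > k \<and> (\<forall>S. S \<subseteq> V \<and> card S < k \<longrightarrow> connected_on E (V - S))"

definition separator :: "'a set \<Rightarrow> ('a \<Rightarrow> 'a \<Rightarrow> bool) \<Rightarrow> 'a set \<Rightarrow> bool" where
  "separator V E S \<longleftrightarrow> S \<subseteq> V \<and> (\<exists>u\<in>V - S. \<exists>v\<in>V - S. \<not> reach E (V - S) u v)"

definition min_separator :: "'a set \<Rightarrow> ('a \<Rightarrow> 'a \<Rightarrow> bool) \<Rightarrow> 'a set \<Rightarrow> bool" where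
  "min_separator V E S \<longleftrightarrow> separator V E S \<and> (\<forall>S'. separator V E S' \<longrightarrow> card S \<le> card S')"

definition component :: "('a \<Rightarrow> 'a \<Rightarrow> bool) \<Rightarrow> 'a set \<Rightarrow> 'a set \<Rightarrow> bool" where
  "component E X K \<longleftrightarrow> (\<exists>u\<in>X. K = {v \<in> X. reach E X u v})"

definition PG :: "'a set \<Rightarrow> ('a \<Rightarrow> 'a \<Rightarrow> bool) \<Rightarrow> ('a set \<times> 'a set) set" where
  "PG V E = {(S, K). min_separator V E S \<and> component E (V - S) K}"

definition P0 :: "'a set \<Rightarrow> ('a \<Rightarrow> 'a \<Rightarrow> bool) \<Rightarrow> ('a set \<times> 'a set) set" where
  "P0 V E = {p \<in> PG V E. \<not> (\<exists>q \<in> PG V E. snd q \<subset> snd p)}"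

definition V_bot :: "'a set \<Rightarrow> ('a \<Rightarrow> 'a \<Rightarrow> bool) \<Rightarrow> 'a set" where
  "V_bot V E = V - (\<Union>p \<in> P0 V E. snd p)"

definition min_degree_ge :: "'a set \<Rightarrow> ('a \<Rightarrow> 'a \<Rightarrow> bool) \<Rightarrow> nat \<Rightarrow> bool" where
  "min_degree_ge V E d \<longleftrightarrow> (\<forall>v\<in>V. card {u \<in> V. E v u} \<ge> d)"

text \<open>Canonical k-WL colours, as concrete terms (hence comparable across graphs).
  Init: input colours of the entries, and the isomorphism type of the ordered
  induced subgraph (equality and adjacency pattern).\<close>
datatype 'c wlcol = Init "'c list" "(bool \<times> bool) list list"
                  | Ref "'c wlcol" "'c wlcol list multiset"

fun wl :: "nat \<Rightarrow> 'a set \<Rightarrow> ('a \<Rightarrow> 'a \<Rightarrow> bool) \<Rightarrow> ('a \<Rightarrow> 'c) \<Rightarrow> nat \<Rightarrow> 'a list \<Rightarrow> 'c wlcol" where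
  "wl k V E col 0 vs =
     Init (map col vs) (map (\<lambda>i. map (\<lambda>j. (vs ! i = vs ! j, E (vs ! i) (vs ! j))) [0..<k]) [0..<k])"
| "wl k V E col (Suc r) vs =
     Ref (wl k V E col r vs)
         (image_mset (\<lambda>w. map (\<lambda>i. wl k V E col r (vs[i := w])) [0..<k]) (mset_set V))"

text \<open>Equality of stable k-WL colours of the diagonal tuples (v,...,v) and (w,...,w):
  the colours agree in every round (the stable colour determines and is determined by
  the colours of all rounds).\<close>
definition wl_same_vertex_color ::
  "nat \<Rightarrow> 'a set \<Rightarrow> ('a \<Rightarrow> 'a \<Rightarrow> bool) \<Rightarrow> ('a \<Rightarrow> 'c) \<Rightarrow> 'a
     \<Rightarrow> 'b set \<Rightarrow> ('b \<Rightarrow> 'b \<Rightarrow> bool) \<Rightarrow> ('b \<Rightarrow> 'c) \<Rightarrow> 'b \<Rightarrow> bool" where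
  "wl_same_vertex_color k VG EG cG v VH EH cH w \<longleftrightarrow>
     (\<forall>r. wl k VG EG cG r (replicate k v) = wl k VH EH cH r (replicate k w))"

end

(*
  If the stable k-WL colours of two tuples agree, every entry can be re-pebbled along a
  bijection of the vertex sets that keeps the colours equal.

  Three pebbles on (a, b, x) determine reachability from x in G - {a, b}: the walks in
  G - a split according to their first visit of b, so reachability is witnessed by
  the number of walks in G - a exceeding the count of walks that pass through b, and
  both counts only ever inspect triples of vertices, so they are WL-invariant.
  Consequently a 2-separator {a, b} of H, the component of w in H - {a, b}, and the
  vertices lying on 2-separators are matched by a 2-separator {a', b'} of G, the
  component of v, and again vertices on 2-separators.

  In a 2-connected, not 3-connected graph of minimum degree 3 a pair (S, K) of P(G) is
  minimal iff K contains no vertex of a 2-separator. Since v lies in no minimal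
  component, its component K' contains such a vertex; its partner lies in the minimal
  component K of w, a contradiction.
*)
theory Submission
  imports Defs "HOL-Library.FuncSet" "HOL-Library.Infinite_Set"
begin

section \<open>Weisfeiler--Leman equivalence of tuples\<close>

definition wl_equiv ::
  "nat \<Rightarrow> 'a set \<Rightarrow> ('a \<Rightarrow> 'a \<Rightarrow> bool) \<Rightarrow> ('a \<Rightarrow> 'c) \<Rightarrow> 'b set \<Rightarrow> ('b \<Rightarrow> 'b \<Rightarrow> bool) \<Rightarrow> ('b \<Rightarrow> 'c)
     \<Rightarrow> 'a list \<Rightarrow> 'b list \<Rightarrow> bool" where
  "wl_equiv k V1 E1 c1 V2 E2 c2 t1 t2 \<longleftrightarrow> (\<forall>r. wl k V1 E1 c1 r t1 = wl k V2 E2 c2 r t2)"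

lemma wl_equiv_sym:
  "wl_equiv k V1 E1 c1 V2 E2 c2 t1 t2 \<Longrightarrow> wl_equiv k V2 E2 c2 V1 E1 c1 t2 t1"
  unfolding wl_equiv_def by metis

lemma wl_eq_if_le:
  assumes "r \<le> r'" and "wl k V1 E1 c1 r' t1 = wl k V2 E2 c2 r' t2"
  shows "wl k V1 E1 c1 r t1 = wl k V2 E2 c2 r t2"
  using assms by (induction r' rule: dec_induct) (simp_all only: wl.simps wlcol.inject)

lemma image_mset_mset_set_eq_obtains_bij_betw:
  assumes "finite A" "finite B" "image_mset f (mset_set A) = image_mset g (mset_set B)"
  obtains h where "bij_betw h A B" "\<forall>x\<in>A. f x = g (h x)"
  using assms
proof (induction A arbitrary: B thesis rule: finite_induct)
  case empty
  then have "B = {}" by (simp add: mset_set_empty_iff)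
  with empty.prems(1) show ?case by (simp add: bij_betw_def)
next
  case (insert x A B)
  have eq: "add_mset (f x) (image_mset f (mset_set A)) = image_mset g (mset_set B)"
    using insert by simp
  then obtain y where y: "y \<in> B" "g y = f x"
  proof -
    have "f x \<in># image_mset g (mset_set B)"
      by (metis eq union_single_eq_member)
    with insert.prems(2) that show thesis by auto
  qed
  then have "image_mset f (mset_set A) = image_mset g (mset_set (B - {y}))"
    using eq insert.prems(2) by (simp add: mset_set.remove)
  then obtain h where h: "bij_betw h A (B - {y})" "\<forall>x\<in>A. f x = g (h x)"
    using insert.IH insert.prems(2) by blast
  have "bij_betw (h(x := y)) A (B - {y})"
    using h(1) insert.hyps(2) by (metis bij_betw_cong fun_upd_other)
  then have "bij_betw (h(x := y)) ({x} \<union> A) ({y} \<union> (B - {y}))"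
    by (intro bij_betw_combine) (auto simp: bij_betw_def)
  then have "bij_betw (h(x := y)) (insert x A) B"
    using y(1) by (simp add: insert_absorb)
  moreover have "\<forall>z\<in>insert x A. f z = g ((h(x := y)) z)"
    using h(2) y(2) insert.hyps(2) by auto
  ultimately show ?case by (rule insert.prems(1))
qed

lemma wl_equiv_obtains_bij_betw:
  assumes "finite V1" "finite V2" and equiv: "wl_equiv k V1 E1 c1 V2 E2 c2 t1 t2"
  obtains f where "bij_betw f V1 V2"
    and "\<And>x j. x \<in> V1 \<Longrightarrow> j < k \<Longrightarrow> wl_equiv k V1 E1 c1 V2 E2 c2 (t1[j := x]) (t2[j := f x])"
proof -
  let ?col1 = "\<lambda>r x. map (\<lambda>i. wl k V1 E1 c1 r (t1[i := x])) [0..<k]"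
  let ?col2 = "\<lambda>r x. map (\<lambda>i. wl k V2 E2 c2 r (t2[i := x])) [0..<k]"
  have "\<exists>h. bij_betw h V1 V2 \<and> (\<forall>x\<in>V1. ?col1 r x = ?col2 r (h x))" for r
  proof -
    have "wl k V1 E1 c1 (Suc r) t1 = wl k V2 E2 c2 (Suc r) t2"
      using equiv unfolding wl_equiv_def by blast
    then have "image_mset (?col1 r) (mset_set V1) = image_mset (?col2 r) (mset_set V2)"
      by (simp only: wl.simps wlcol.inject)
    with assms(1,2) obtain h where "bij_betw h V1 V2" "\<forall>x\<in>V1. ?col1 r x = ?col2 r (h x)"
      by (rule image_mset_mset_set_eq_obtains_bij_betw)
    then show ?thesis by blast
  qed
  then obtain H where H: "\<And>r. bij_betw (H r) V1 V2" "\<And>r x. x \<in> V1 \<Longrightarrow> ?col1 r x = ?col2 r (H r x)"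
    by metis
  \<comment> \<open>Only finitely many maps V1 \<rightarrow> V2 exist, so a single one serves infinitely many,
    hence (by monotonicity of the refinement) all rounds.\<close>
  have "range (\<lambda>r. restrict (H r) V1) \<subseteq> V1 \<rightarrow>\<^sub>E V2"
    using bij_betw_apply[OF H(1)] by auto
  moreover have "finite (V1 \<rightarrow>\<^sub>E V2)"
    using assms(1,2) by (simp add: finite_PiE)
  ultimately have "finite (range (\<lambda>r. restrict (H r) V1))"
    by (rule finite_subset)
  then obtain r0 where r0: "infinite {r. restrict (H r) V1 = restrict (H r0) V1}"
    using pigeonhole_infinite[of UNIV] by auto
  have "wl_equiv k V1 E1 c1 V2 E2 c2 (t1[j := x]) (t2[j := H r0 x])" if "x \<in> V1" "j < k" for x j
    unfolding wl_equiv_def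
  proof
    fix r
    obtain r' where r': "r \<le> r'" "restrict (H r') V1 = restrict (H r0) V1"
      using r0 unfolding infinite_nat_iff_unbounded_le by blast
    then have "H r' x = H r0 x"
      using \<open>x \<in> V1\<close> by (metis restrict_apply')
    then have "wl k V1 E1 c1 r' (t1[j := x]) = wl k V2 E2 c2 r' (t2[j := H r0 x])"
      using H(2)[OF \<open>x \<in> V1\<close>, of r'] \<open>j < k\<close> by simp
    with r'(1) show "wl k V1 E1 c1 r (t1[j := x]) = wl k V2 E2 c2 r (t2[j := H r0 x])"
      by (rule wl_eq_if_le)
  qed
  with H(1) that show thesis by blast
qed

lemma wl_equiv_atomic_type:
  assumes "wl_equiv k V1 E1 c1 V2 E2 c2 t1 t2" "i < k" "j < k"
  shows "t1 ! i = t1 ! j \<longleftrightarrow> t2 ! i = t2 ! j" and "E1 (t1 ! i) (t1 ! j) \<longleftrightarrow> E2 (t2 ! i) (t2 ! j)"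
proof -
  have "wl k V1 E1 c1 0 t1 = wl k V2 E2 c2 0 t2"
    using assms(1) unfolding wl_equiv_def by blast
  then have "map (\<lambda>i. map (\<lambda>j. (t1 ! i = t1 ! j, E1 (t1 ! i) (t1 ! j))) [0..<k]) [0..<k] ! i ! j
    = map (\<lambda>i. map (\<lambda>j. (t2 ! i = t2 ! j, E2 (t2 ! i) (t2 ! j))) [0..<k]) [0..<k] ! i ! j"
    by (simp only: wl.simps wlcol.inject)
  then show "t1 ! i = t1 ! j \<longleftrightarrow> t2 ! i = t2 ! j" and "E1 (t1 ! i) (t1 ! j) \<longleftrightarrow> E2 (t2 ! i) (t2 ! j)"
    using assms(2,3) by simp_all
qed

lemma wl_equiv_extend:
  assumes "finite V1" "finite V2" "wl_equiv k V1 E1 c1 V2 E2 c2 t1 t2" "x \<in> V1" "j < k"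
  obtains x' where "x' \<in> V2" "wl_equiv k V1 E1 c1 V2 E2 c2 (t1[j := x]) (t2[j := x'])"
  using wl_equiv_obtains_bij_betw[OF assms(1-3)] assms(4,5) by (metis bij_betw_apply)

lemma wl_equiv_update_atomic_type:
  assumes "wl_equiv k V1 E1 c1 V2 E2 c2 (t1[j := x]) (t2[j := y])"
    and "length t1 = k" "length t2 = k" "i < k" "j < k" "i \<noteq> j"
  shows "t1 ! i = x \<longleftrightarrow> t2 ! i = y" and "E1 (t1 ! i) x \<longleftrightarrow> E2 (t2 ! i) y"
  using wl_equiv_atomic_type[OF assms(1), of i j] assms(2-6) by simp_all

lemma wl_equiv_replicate_obtains_pair:
  assumes "finite V1" "finite V2" "1 < k"
    and "wl_equiv k V1 E1 c1 V2 E2 c2 (replicate k x) (replicate k x')" "a \<in> V1" "b \<in> V1"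
  obtains a' b' where "a' \<in> V2" "b' \<in> V2"
    and "wl_equiv k V1 E1 c1 V2 E2 c2 ((replicate k x)[0 := a, 1 := b]) ((replicate k x')[0 := a', 1 := b'])"
proof -
  obtain a' where a': "a' \<in> V2"
    "wl_equiv k V1 E1 c1 V2 E2 c2 ((replicate k x)[0 := a]) ((replicate k x')[0 := a'])"
    using wl_equiv_extend[OF assms(1,2,4,5), of 0] assms(3) by auto
  moreover obtain b' where "b' \<in> V2"
    "wl_equiv k V1 E1 c1 V2 E2 c2 ((replicate k x)[0 := a, 1 := b]) ((replicate k x')[0 := a', 1 := b'])"
    using wl_equiv_extend[OF assms(1,2) a'(2) assms(6), of 1] assms(3) by auto
  ultimately show thesis
    using that by blast
qed

section \<open>Reachability and components\<close>

lemma graph_sym: "graph V E \<Longrightarrow> E x y \<Longrightarrow> E y x"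
  and graph_edge_in: "graph V E \<Longrightarrow> E x y \<Longrightarrow> x \<in> V \<and> y \<in> V"
  and graph_irrefl: "graph V E \<Longrightarrow> \<not> E x x"
  and graph_finite: "graph V E \<Longrightarrow> finite V"
  unfolding graph_def by blast+

lemma reach_refl [simp]: "reach E X u u"
  unfolding reach_def by simp

lemma reach_edge: "E u v \<Longrightarrow> u \<in> X \<Longrightarrow> v \<in> X \<Longrightarrow> reach E X u v"
  unfolding reach_def by (simp add: r_into_rtranclp)

lemma reach_trans: "reach E X u v \<Longrightarrow> reach E X v w \<Longrightarrow> reach E X u w"
  unfolding reach_def by (rule rtranclp_trans)

lemma reach_step: "reach E X u v \<Longrightarrow> E v w \<Longrightarrow> v \<in> X \<Longrightarrow> w \<in> X \<Longrightarrow> reach E X u w"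
  using reach_trans reach_edge by metis

lemma reach_stepl: "E u v \<Longrightarrow> u \<in> X \<Longrightarrow> v \<in> X \<Longrightarrow> reach E X v w \<Longrightarrow> reach E X u w"
  using reach_trans reach_edge by metis

lemma reach_mono: "reach E X u v \<Longrightarrow> X \<subseteq> Y \<Longrightarrow> reach E Y u v"
  unfolding reach_def by (induction rule: rtranclp_induct) (auto intro: rtranclp.rtrancl_into_rtrancl)

lemma reach_endpoints: "reach E X u v \<Longrightarrow> u = v \<or> u \<in> X \<and> v \<in> X"
  unfolding reach_def by (induction rule: rtranclp_induct) auto

lemma reach_sym:
  assumes "graph V E" "reach E X u v"
  shows "reach E X v u"
  using assms(2) unfolding reach_def
  by (induction rule: rtranclp_induct) (auto intro: converse_rtranclp_into_rtranclp dest: graph_sym[OF assms(1)])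

definition component_of :: "('a \<Rightarrow> 'a \<Rightarrow> bool) \<Rightarrow> 'a set \<Rightarrow> 'a \<Rightarrow> 'a set" where
  "component_of E X u = {v \<in> X. reach E X u v}"

lemma component_of_self: "u \<in> X \<Longrightarrow> u \<in> component_of E X u"
  unfolding component_of_def by simp

lemma component_of_subset: "component_of E X u \<subseteq> X"
  unfolding component_of_def by blast

lemma component_component_of: "u \<in> X \<Longrightarrow> component E X (component_of E X u)"
  unfolding component_def component_of_def by blast

lemma component_eq_component_of:
  assumes "graph V E" "component E X K" "u \<in> K"
  shows "K = component_of E X u"
proof -
  obtain u0 where u0: "u0 \<in> X" "K = component_of E X u0"
    using assms(2) unfolding component_def component_of_def by blast
  then have "reach E X u0 u" "reach E X u u0"
    using assms(3) reach_sym[OF assms(1)] unfolding component_of_def by blast+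
  then show ?thesis
    unfolding u0(2) component_of_def by (blast intro: reach_trans)
qed

lemma reach_component_of: "reach E X u v \<Longrightarrow> reach E (component_of E X u) u v"
  unfolding reach_def[of E X]
proof (induction rule: rtranclp_induct)
  case (step y z)
  then have "reach E X u y" "reach E X u z"
    unfolding reach_def by (auto intro: rtranclp.rtrancl_into_rtrancl)
  with step show ?case
    unfolding component_of_def by (auto intro: reach_step)
qed simp

lemma component_of_subset_if_closed:
  assumes "u \<in> Y" "Y \<subseteq> X" "\<And>y x. y \<in> Y \<Longrightarrow> x \<in> X \<Longrightarrow> E y x \<Longrightarrow> x \<in> Y"
  shows "component_of E X u \<subseteq> Y"
proof
  fix v assume "v \<in> component_of E X u"
  then have "reach E X u v" unfolding component_of_def by blast
  then show "v \<in> Y"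
    unfolding reach_def by (induction rule: rtranclp_induct) (use assms in auto)
qed

lemma separator_obtains_unreachable:
  assumes "graph V E" "separator V E S"
  obtains y where "y \<in> V - S" "\<not> reach E (V - S) x y"
proof -
  obtain u v where uv: "u \<in> V - S" "v \<in> V - S" "\<not> reach E (V - S) u v"
    using assms(2) unfolding separator_def by blast
  show thesis
  proof (cases "reach E (V - S) x u")
    case True
    then have "\<not> reach E (V - S) x v"
      using uv(3) reach_sym[OF assms(1)] reach_trans by metis
    with uv(2) that show thesis by blast
  qed (use uv(1) that in blast)
qed

section \<open>Walk counts\<close>

text \<open>The start vertex of a walk is exempt from the constraints: \<open>walks_avoiding V E a l p q\<close>
  counts walks \<open>p = z\<^sub>0, \<dots>, z\<^sub>l = q\<close> with \<open>z\<^sub>1, \<dots>, z\<^sub>l \<noteq> a\<close>;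
  \<open>walks_avoiding2\<close> additionally requires all \<open>z\<^sub>i \<noteq> b\<close> (including \<open>z\<^sub>0\<close>), and
  \<open>first_hits\<close> counts the walks avoiding a whose only visit of b is \<open>z\<^sub>l\<close>.\<close>

fun walks_avoiding :: "'a set \<Rightarrow> ('a \<Rightarrow> 'a \<Rightarrow> bool) \<Rightarrow> 'a \<Rightarrow> nat \<Rightarrow> 'a \<Rightarrow> 'a \<Rightarrow> nat" where
  "walks_avoiding V E a 0 p q = (if p = q then 1 else 0)"
| "walks_avoiding V E a (Suc l) p q = (\<Sum>z\<in>{z\<in>V. E p z \<and> z \<noteq> a}. walks_avoiding V E a l z q)"

fun first_hits :: "'a set \<Rightarrow> ('a \<Rightarrow> 'a \<Rightarrow> bool) \<Rightarrow> 'a \<Rightarrow> 'a \<Rightarrow> nat \<Rightarrow> 'a \<Rightarrow> nat" where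
  "first_hits V E a b 0 p = (if p = b then 1 else 0)"
| "first_hits V E a b (Suc i) p =
     (if p = b then 0 else (\<Sum>z\<in>{z\<in>V. E p z \<and> z \<noteq> a}. first_hits V E a b i z))"

fun walks_avoiding2 :: "'a set \<Rightarrow> ('a \<Rightarrow> 'a \<Rightarrow> bool) \<Rightarrow> 'a \<Rightarrow> 'a \<Rightarrow> nat \<Rightarrow> 'a \<Rightarrow> 'a \<Rightarrow> nat" where
  "walks_avoiding2 V E a b 0 p q = (if p = q \<and> p \<noteq> b then 1 else 0)"
| "walks_avoiding2 V E a b (Suc l) p q =
     (if p = b then 0 else (\<Sum>z\<in>{z\<in>V. E p z \<and> z \<noteq> a}. walks_avoiding2 V E a b l z q))"

lemma walks_avoiding_first_hit_decomp:
  "walks_avoiding V E a l p q =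
     walks_avoiding2 V E a b l p q + (\<Sum>i\<le>l. first_hits V E a b i p * walks_avoiding V E a (l - i) b q)"
proof (induction l arbitrary: p)
  case (Suc l)
  show ?case
  proof (cases "p = b")
    case True
    then show ?thesis by (simp only: sum.atMost_Suc_shift) simp
  next
    case False
    define Z where "Z = {z\<in>V. E p z \<and> z \<noteq> a}"
    have "walks_avoiding V E a (Suc l) p q = (\<Sum>z\<in>Z. walks_avoiding V E a l z q)"
      by (simp add: Z_def)
    also have "\<dots> = (\<Sum>z\<in>Z. walks_avoiding2 V E a b l z q
        + (\<Sum>i\<le>l. first_hits V E a b i z * walks_avoiding V E a (l - i) b q))"
      using Suc.IH by simp
    also have "\<dots> = (\<Sum>z\<in>Z. walks_avoiding2 V E a b l z q)
        + (\<Sum>i\<le>l. (\<Sum>z\<in>Z. first_hits V E a b i z) * walks_avoiding V E a (l - i) b q)"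
      by (simp add: sum.distrib sum_distrib_right sum.swap[of _ Z])
    also have "\<dots> = walks_avoiding2 V E a b (Suc l) p q
        + (\<Sum>i\<le>l. first_hits V E a b (Suc i) p * walks_avoiding V E a (Suc l - Suc i) b q)"
      using False by (simp add: Z_def)
    also have "\<dots> = walks_avoiding2 V E a b (Suc l) p q
        + (\<Sum>i\<le>Suc l. first_hits V E a b i p * walks_avoiding V E a (Suc l - i) b q)"
      using False by (simp only: sum.atMost_Suc_shift) simp
    finally show ?thesis .
  qed
qed simp

lemma walks_avoiding2_start: "walks_avoiding2 V E a b l p q \<noteq> 0 \<Longrightarrow> p \<noteq> b"
  by (cases l) auto

lemma reach_if_walks_avoiding2:
  assumes "graph V E" "p \<noteq> a" "walks_avoiding2 V E a b l p q \<noteq> 0"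
  shows "reach E (V - {a, b}) p q"
  using assms(2,3)
proof (induction l arbitrary: p)
  case (Suc l)
  then have "(\<Sum>z\<in>{z\<in>V. E p z \<and> z \<noteq> a}. walks_avoiding2 V E a b l z q) \<noteq> 0"
    by (metis walks_avoiding2.simps(2))
  then obtain z where z: "z \<in> V" "E p z" "z \<noteq> a" "walks_avoiding2 V E a b l z q \<noteq> 0"
    by (metis (mono_tags, lifting) mem_Collect_eq sum.neutral)
  have "p \<in> V - {a, b}" "z \<in> V - {a, b}"
    using Suc.prems walks_avoiding2_start[OF Suc.prems(2)] walks_avoiding2_start[OF z(4)]
      graph_edge_in[OF assms(1) z(2)] z(3) by auto
  with z Suc.IH show ?case by (blast intro: reach_stepl)
qed (simp split: if_splits)

lemma walks_avoiding2_if_reach: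
  assumes "graph V E" "reach E (V - {a, b}) p q" "q \<notin> {a, b}"
  shows "\<exists>l. walks_avoiding2 V E a b l p q \<noteq> 0"
  using assms(2) unfolding reach_def
proof (induction rule: converse_rtranclp_induct)
  case base
  then show ?case using assms(3) by (intro exI[of _ 0]) simp
next
  case (step p p')
  then obtain l where "walks_avoiding2 V E a b l p' q \<noteq> 0" by blast
  moreover have "finite {z\<in>V. E p z \<and> z \<noteq> a}" "p' \<in> {z\<in>V. E p z \<and> z \<noteq> a}"
    using graph_finite[OF assms(1)] step(1) by auto
  ultimately have "walks_avoiding2 V E a b (Suc l) p q \<noteq> 0"
    using step(1) by (auto simp: sum_eq_0_iff)
  then show ?case by blast
qed

lemma reach_iff_walk_count_excess:
  assumes "graph V E" "p \<in> V - {a, b}" "q \<in> V - {a, b}"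
  shows "reach E (V - {a, b}) p q \<longleftrightarrow>
    (\<exists>l. walks_avoiding V E a l p q \<noteq> (\<Sum>i\<le>l. first_hits V E a b i p * walks_avoiding V E a (l - i) b q))"
proof -
  have "reach E (V - {a, b}) p q \<longleftrightarrow> (\<exists>l. walks_avoiding2 V E a b l p q \<noteq> 0)"
    using assms reach_if_walks_avoiding2[OF assms(1)] walks_avoiding2_if_reach[OF assms(1)]
    by (metis Diff_iff insertCI)
  also have "\<dots> \<longleftrightarrow> (\<exists>l. walks_avoiding V E a l p q \<noteq>
      (\<Sum>i\<le>l. first_hits V E a b i p * walks_avoiding V E a (l - i) b q))"
  proof -
    have "walks_avoiding2 V E a b l p q \<noteq> 0 \<longleftrightarrow> walks_avoiding V E a l p q \<noteq>
        (\<Sum>i\<le>l. first_hits V E a b i p * walks_avoiding V E a (l - i) b q)" for l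
      unfolding walks_avoiding_first_hit_decomp[of V E a l p q b] by simp
    then show ?thesis by blast
  qed
  finally show ?thesis .
qed

section \<open>Invariance under Weisfeiler--Leman equivalence\<close>

lemma sum_filter_bij_betw:
  assumes "bij_betw f A B" "\<And>x. x \<in> A \<Longrightarrow> P x \<longleftrightarrow> Q (f x)"
    and "\<And>x. x \<in> A \<Longrightarrow> P x \<Longrightarrow> g x = h (f x)"
  shows "(\<Sum>x\<in>{x\<in>A. P x}. g x) = (\<Sum>y\<in>{y\<in>B. Q y}. h y)"
proof -
  have "f ` {x\<in>A. P x} = {y\<in>B. Q y}"
    using assms(1,2) unfolding bij_betw_def by force
  moreover have "inj_on f {x\<in>A. P x}"
    using assms(1) unfolding bij_betw_def by (blast intro: inj_on_subset)
  ultimately have "bij_betw f {x\<in>A. P x} {y\<in>B. Q y}"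
    unfolding bij_betw_def by blast
  then show ?thesis
    using assms(3) by (simp add: sum.reindex_bij_betw[symmetric])
qed

lemma wl_equiv_walks_avoiding:
  assumes "finite V1" "finite V2" "3 \<le> k"
    and "wl_equiv k V1 E1 c1 V2 E2 c2 t1 t2" "length t1 = k" "length t2 = k"
  shows "walks_avoiding V1 E1 (t1 ! 0) l (t1 ! 1) (t1 ! 2) = walks_avoiding V2 E2 (t2 ! 0) l (t2 ! 1) (t2 ! 2)"
  using assms(4-6)
proof (induction l arbitrary: t1 t2)
  case 0
  then show ?case using wl_equiv_atomic_type(1)[OF 0(1), of 1 2] assms(3) by simp
next
  case (Suc l)
  obtain f where f: "bij_betw f V1 V2"
    and equiv: "\<And>x j. x \<in> V1 \<Longrightarrow> j < k \<Longrightarrow> wl_equiv k V1 E1 c1 V2 E2 c2 (t1[j := x]) (t2[j := f x])"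
    using wl_equiv_obtains_bij_betw[OF assms(1,2) Suc.prems(1)] by blast
  show ?case
    unfolding walks_avoiding.simps
  proof (rule sum_filter_bij_betw[OF f])
    fix x assume "x \<in> V1"
    with equiv[of x 2] Suc.prems(2,3) assms(3)
    show "E1 (t1 ! 1) x \<and> x \<noteq> t1 ! 0 \<longleftrightarrow> E2 (t2 ! 1) (f x) \<and> f x \<noteq> t2 ! 0"
      using wl_equiv_update_atomic_type[of k _ _ _ _ _ _ t1 2 x t2 "f x"] by fastforce
    show "walks_avoiding V1 E1 (t1 ! 0) l x (t1 ! 2) = walks_avoiding V2 E2 (t2 ! 0) l (f x) (t2 ! 2)"
      using Suc.IH[OF equiv[OF \<open>x \<in> V1\<close>, of 1]] Suc.prems(2,3) assms(3) by simp
  qed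
qed

lemma wl_equiv_first_hits:
  assumes "finite V1" "finite V2" "3 \<le> k"
    and "wl_equiv k V1 E1 c1 V2 E2 c2 t1 t2" "length t1 = k" "length t2 = k"
  shows "first_hits V1 E1 (t1 ! 0) (t1 ! 1) i (t1 ! 2) = first_hits V2 E2 (t2 ! 0) (t2 ! 1) i (t2 ! 2)"
  using assms(4-6)
proof (induction i arbitrary: t1 t2)
  case 0
  then show ?case using wl_equiv_atomic_type(1)[OF 0(1), of 2 1] assms(3) by simp
next
  case (Suc i)
  obtain f where f: "bij_betw f V1 V2"
    and equiv: "\<And>x j. x \<in> V1 \<Longrightarrow> j < k \<Longrightarrow> wl_equiv k V1 E1 c1 V2 E2 c2 (t1[j := x]) (t2[j := f x])"
    using wl_equiv_obtains_bij_betw[OF assms(1,2) Suc.prems(1)] by blast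
  have "(\<Sum>z\<in>{z\<in>V1. E1 (t1 ! 2) z \<and> z \<noteq> t1 ! 0}. first_hits V1 E1 (t1 ! 0) (t1 ! 1) i z)
      = (\<Sum>z\<in>{z\<in>V2. E2 (t2 ! 2) z \<and> z \<noteq> t2 ! 0}. first_hits V2 E2 (t2 ! 0) (t2 ! 1) i z)"
  proof (rule sum_filter_bij_betw[OF f])
    fix x assume "x \<in> V1"
    have "E1 (t1 ! 2) x \<longleftrightarrow> E2 (t2 ! 2) (f x)"
      using wl_equiv_update_atomic_type(2)[OF equiv[OF \<open>x \<in> V1\<close>, of 0]] Suc.prems(2,3) assms(3)
      by simp
    moreover have "x = t1 ! 0 \<longleftrightarrow> f x = t2 ! 0"
      using wl_equiv_update_atomic_type(1)[OF equiv[OF \<open>x \<in> V1\<close>, of 2], of 0] Suc.prems(2,3) assms(3)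
      by auto
    ultimately show "E1 (t1 ! 2) x \<and> x \<noteq> t1 ! 0 \<longleftrightarrow> E2 (t2 ! 2) (f x) \<and> f x \<noteq> t2 ! 0"
      by blast
    show "first_hits V1 E1 (t1 ! 0) (t1 ! 1) i x = first_hits V2 E2 (t2 ! 0) (t2 ! 1) i (f x)"
      using Suc.IH[OF equiv[OF \<open>x \<in> V1\<close>, of 2]] Suc.prems(2,3) assms(3) by simp
  qed
  moreover have "t1 ! 2 = t1 ! 1 \<longleftrightarrow> t2 ! 2 = t2 ! 1"
    using wl_equiv_atomic_type(1)[OF Suc.prems(1), of 2 1] assms(3) by simp
  ultimately show ?case by simp
qed

lemma wl_equiv_reach_iff:
  assumes "graph V1 E1" "graph V2 E2" "3 \<le> k"
    and equiv: "wl_equiv k V1 E1 c1 V2 E2 c2 t1 t2"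
    and equiv1: "wl_equiv k V1 E1 c1 V2 E2 c2 (t1[1 := y]) (t2[1 := y'])"
    and equiv2: "wl_equiv k V1 E1 c1 V2 E2 c2 (t1[2 := y]) (t2[2 := y'])"
    and len: "length t1 = k" "length t2 = k"
    and t1: "t1 ! 0 = a" "t1 ! 1 = b" "t1 ! 2 = x" and t2: "t2 ! 0 = a'" "t2 ! 1 = b'" "t2 ! 2 = x'"
    and G1: "x \<in> V1 - {a, b}" "y \<in> V1 - {a, b}" and G2: "x' \<in> V2 - {a', b'}" "y' \<in> V2 - {a', b'}"
  shows "reach E1 (V1 - {a, b}) x y \<longleftrightarrow> reach E2 (V2 - {a', b'}) x' y'"
proof -
  have fin: "finite V1" "finite V2"
    using assms(1,2) graph_finite by blast+
  have walks_b: "walks_avoiding V1 E1 a l b x = walks_avoiding V2 E2 a' l b' x'" for l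
    using wl_equiv_walks_avoiding[OF fin assms(3) equiv len, of l] t1 t2 by simp
  have walks_y: "walks_avoiding V1 E1 a l y x = walks_avoiding V2 E2 a' l y' x'" for l
    using wl_equiv_walks_avoiding[OF fin assms(3) equiv1, of l] len assms(3) t1 t2 by simp
  have hits: "first_hits V1 E1 a b i y = first_hits V2 E2 a' b' i y'" for i
    using wl_equiv_first_hits[OF fin assms(3) equiv2, of i] len assms(3) t1 t2 by simp
  have "reach E1 (V1 - {a, b}) x y \<longleftrightarrow> reach E1 (V1 - {a, b}) y x"
    using reach_sym[OF assms(1)] by blast
  also have "\<dots> \<longleftrightarrow> reach E2 (V2 - {a', b'}) y' x'"
    unfolding reach_iff_walk_count_excess[OF assms(1) G1(2,1)]
      reach_iff_walk_count_excess[OF assms(2) G2(2,1)] walks_b walks_y hits ..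
  also have "\<dots> \<longleftrightarrow> reach E2 (V2 - {a', b'}) x' y'"
    using reach_sym[OF assms(2)] by blast
  finally show ?thesis .
qed

lemma wl_equiv_obtains_reach_preserving_bij:
  assumes "graph V1 E1" "graph V2 E2" "3 \<le> k"
    and equiv: "wl_equiv k V1 E1 c1 V2 E2 c2 t1 t2" and len: "length t1 = k" "length t2 = k"
    and t1: "t1 ! 0 = a" "t1 ! 1 = b" "t1 ! 2 = x" and t2: "t2 ! 0 = a'" "t2 ! 1 = b'" "t2 ! 2 = x'"
    and x: "x \<in> V1 - {a, b}" and "x' \<in> V2"
  obtains g where "bij_betw g V1 V2"
    and "\<And>y. y \<in> V1 \<Longrightarrow> wl_equiv k V1 E1 c1 V2 E2 c2 (t1[2 := y]) (t2[2 := g y])"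
    and "\<And>y. y \<in> V1 \<Longrightarrow> y \<in> {a, b} \<longleftrightarrow> g y \<in> {a', b'}"
    and "\<And>y. y \<in> V1 - {a, b} \<Longrightarrow> reach E1 (V1 - {a, b}) x y \<longleftrightarrow> reach E2 (V2 - {a', b'}) x' (g y)"
proof -
  have fin: "finite V1" "finite V2"
    using assms(1,2) graph_finite by blast+
  obtain g where g: "bij_betw g V1 V2"
    and equiv_g: "\<And>y j. y \<in> V1 \<Longrightarrow> j < k \<Longrightarrow> wl_equiv k V1 E1 c1 V2 E2 c2 (t1[j := y]) (t2[j := g y])"
    using wl_equiv_obtains_bij_betw[OF fin equiv] by blast
  have x': "x' \<in> V2 - {a', b'}"
    using wl_equiv_atomic_type(1)[OF equiv, of 2 0] wl_equiv_atomic_type(1)[OF equiv, of 2 1]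
      assms(3,14) x len t1 t2 by auto
  have members: "y \<in> {a, b} \<longleftrightarrow> g y \<in> {a', b'}" if "y \<in> V1" for y
  proof -
    have "a = y \<longleftrightarrow> a' = g y" "b = y \<longleftrightarrow> b' = g y"
      using wl_equiv_update_atomic_type(1)[OF equiv_g[OF that, of 2] len, of 0]
        wl_equiv_update_atomic_type(1)[OF equiv_g[OF that, of 2] len, of 1] assms(3) t1 t2
      by simp_all
    then show ?thesis by blast
  qed
  have "reach E1 (V1 - {a, b}) x y \<longleftrightarrow> reach E2 (V2 - {a', b'}) x' (g y)" if y: "y \<in> V1 - {a, b}" for y
  proof (rule wl_equiv_reach_iff[OF assms(1-3) equiv equiv_g equiv_g len t1 t2 x y x'])
    show "g y \<in> V2 - {a', b'}"
      using members y bij_betw_apply[OF g] by blast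
  qed (use y assms(3) in auto)
  with that g equiv_g members assms(3) show thesis by auto
qed

lemma wl_equiv_separator:
  assumes "graph V1 E1" "graph V2 E2" "3 \<le> k"
    and equiv: "wl_equiv k V1 E1 c1 V2 E2 c2 t1 t2" and len: "length t1 = k" "length t2 = k"
    and t1: "t1 ! 0 = a" "t1 ! 1 = b" "t1 ! 2 = x" and t2: "t2 ! 0 = a'" "t2 ! 1 = b'" "t2 ! 2 = x'"
    and x: "x \<in> V1 - {a, b}" and "a' \<in> V2" "b' \<in> V2" "x' \<in> V2"
    and sep: "separator V1 E1 {a, b}"
  shows "separator V2 E2 {a', b'}"
proof -
  obtain g where g: "bij_betw g V1 V2"
    and "\<And>y. y \<in> V1 \<Longrightarrow> wl_equiv k V1 E1 c1 V2 E2 c2 (t1[2 := y]) (t2[2 := g y])"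
    and members: "\<And>y. y \<in> V1 \<Longrightarrow> y \<in> {a, b} \<longleftrightarrow> g y \<in> {a', b'}"
    and reach: "\<And>y. y \<in> V1 - {a, b} \<Longrightarrow> reach E1 (V1 - {a, b}) x y \<longleftrightarrow> reach E2 (V2 - {a', b'}) x' (g y)"
    using wl_equiv_obtains_reach_preserving_bij[OF assms(1-3) equiv len t1 t2 x \<open>x' \<in> V2\<close>] by blast
  obtain y where y: "y \<in> V1 - {a, b}" "\<not> reach E1 (V1 - {a, b}) x y"
    using separator_obtains_unreachable[OF assms(1) sep] by blast
  have "x' \<noteq> a'" "x' \<noteq> b'"
    using wl_equiv_atomic_type(1)[OF equiv, of 2 0] wl_equiv_atomic_type(1)[OF equiv, of 2 1]
      assms(3) x t1 t2 by auto
  moreover have "g y \<in> V2 - {a', b'}"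
    using members y bij_betw_apply[OF g] by blast
  moreover have "\<not> reach E2 (V2 - {a', b'}) x' (g y)"
    using reach y by blast
  ultimately show ?thesis
    unfolding separator_def using assms(14-16) by blast
qed

definition in_two_separator :: "'a set \<Rightarrow> ('a \<Rightarrow> 'a \<Rightarrow> bool) \<Rightarrow> 'a \<Rightarrow> bool" where
  "in_two_separator V E y \<longleftrightarrow> (\<exists>z. z \<noteq> y \<and> separator V E {y, z})"

lemma wl_equiv_in_two_separator:
  assumes "graph V1 E1" "graph V2 E2" "3 \<le> k"
    and equiv: "wl_equiv k V1 E1 c1 V2 E2 c2 t1 t2" and len: "length t1 = k" "length t2 = k"
    and y: "t1 ! 2 = y" "y \<in> V1" and y': "t2 ! 2 = y'" "y' \<in> V2"
    and "in_two_separator V1 E1 y"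
  shows "in_two_separator V2 E2 y'"
proof -
  have fin: "finite V1" "finite V2"
    using assms(1,2) graph_finite by blast+
  obtain z where z: "z \<noteq> y" "separator V1 E1 {y, z}"
    using assms(11) unfolding in_two_separator_def by blast
  then obtain p where p: "p \<in> V1 - {y, z}" "z \<in> V1"
    unfolding separator_def by blast
  obtain y'' where "wl_equiv k V1 E1 c1 V2 E2 c2 (t1[0 := y]) (t2[0 := y''])"
    using wl_equiv_extend[OF fin equiv y(2), of 0] assms(3) by auto
  moreover have "y'' = y'"
    using wl_equiv_update_atomic_type(1)[OF calculation len, of 2] assms(3) y y' by simp
  ultimately have equiv0: "wl_equiv k V1 E1 c1 V2 E2 c2 (t1[0 := y]) (t2[0 := y'])"
    by simp
  obtain z' where z': "z' \<in> V2" "wl_equiv k V1 E1 c1 V2 E2 c2 (t1[0 := y, 1 := z]) (t2[0 := y', 1 := z'])"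
    using wl_equiv_extend[OF fin equiv0 p(2), of 1] assms(3) by auto
  obtain p' where p': "p' \<in> V2"
    and equiv2: "wl_equiv k V1 E1 c1 V2 E2 c2 (t1[0 := y, 1 := z, 2 := p]) (t2[0 := y', 1 := z', 2 := p'])"
    using wl_equiv_extend[OF fin z'(2), of p 2] p(1) assms(3) by auto
  have "z' \<noteq> y'"
    using wl_equiv_update_atomic_type(1)[OF z'(2), of 0] len z(1) assms(3) by simp
  moreover have "separator V2 E2 {y', z'}"
    by (rule wl_equiv_separator[OF assms(1-3) equiv2 _ _ _ _ _ _ _ _ _ _ _ _ z(2)])
      (use len assms(3) p p' z' y' in auto)
  ultimately show ?thesis
    unfolding in_two_separator_def by blast
qed

lemma wl_equiv_two_separator_vertex_in_component:
  assumes "graph V1 E1" "graph V2 E2" "3 \<le> k"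
    and equiv: "wl_equiv k V1 E1 c1 V2 E2 c2 t1 t2" and len: "length t1 = k" "length t2 = k"
    and t1: "t1 ! 0 = a" "t1 ! 1 = b" "t1 ! 2 = x" and t2: "t2 ! 0 = a'" "t2 ! 1 = b'" "t2 ! 2 = x'"
    and x: "x \<in> V1 - {a, b}" and "x' \<in> V2"
    and "y' \<in> component_of E2 (V2 - {a', b'}) x'" "in_two_separator V2 E2 y'"
  shows "\<exists>y\<in>component_of E1 (V1 - {a, b}) x. in_two_separator V1 E1 y"
proof -
  obtain g where g: "bij_betw g V1 V2"
    and equiv_g: "\<And>y. y \<in> V1 \<Longrightarrow> wl_equiv k V1 E1 c1 V2 E2 c2 (t1[2 := y]) (t2[2 := g y])"
    and members: "\<And>y. y \<in> V1 \<Longrightarrow> y \<in> {a, b} \<longleftrightarrow> g y \<in> {a', b'}"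
    and reach: "\<And>y. y \<in> V1 - {a, b} \<Longrightarrow> reach E1 (V1 - {a, b}) x y \<longleftrightarrow> reach E2 (V2 - {a', b'}) x' (g y)"
    using wl_equiv_obtains_reach_preserving_bij[OF assms(1-3) equiv len t1 t2 x \<open>x' \<in> V2\<close>] by blast
  have y': "y' \<in> V2 - {a', b'}" "reach E2 (V2 - {a', b'}) x' y'"
    using assms(15) unfolding component_of_def by auto
  then obtain y where y: "y \<in> V1" "g y = y'"
    using g unfolding bij_betw_def by auto
  then have "y \<in> V1 - {a, b}"
    using members y'(1) by auto
  then have "y \<in> component_of E1 (V1 - {a, b}) x"
    using reach y y'(2) unfolding component_of_def by auto
  moreover have "in_two_separator V1 E1 y"
    using wl_equiv_in_two_separator[OF assms(2,1,3) wl_equiv_sym[OF equiv_g[OF y(1)]]]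
      len assms(3,16) y y'(1) by simp
  ultimately show ?thesis by blast
qed

section \<open>Minimal components and 2-separators\<close>

lemma two_connected_remove_vertex:
  assumes "k_connected V E 2" "x \<in> V"
  shows "connected_on E (V - {x})"
proof -
  have "{x} \<subseteq> V" "card {x} < 2"
    using assms(2) by auto
  with assms(1) show ?thesis
    unfolding k_connected_def by blast
qed

lemma two_connected_separator_card:
  assumes "k_connected V E 2" "separator V E S"
  shows "2 \<le> card S"
proof (rule ccontr)
  assume "\<not> 2 \<le> card S"
  moreover have "S \<subseteq> V"
    using assms(2) unfolding separator_def by blast
  ultimately have "connected_on E (V - S)"
    using assms(1) unfolding k_connected_def by simp
  with assms(2) show False
    unfolding separator_def connected_on_def by blast
qed

lemma min_separator_if_two_separator:
  assumes "k_connected V E 2" "a \<noteq> b" "separator V E {a, b}"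
  shows "min_separator V E {a, b}"
  using two_connected_separator_card[OF assms(1)] assms(2,3) unfolding min_separator_def
  by (simp add: numeral_2_eq_2)

lemma min_separator_is_pair:
  assumes "graph V E" "k_connected V E 2" "\<not> k_connected V E 3" "min_degree_ge V E 3"
    and "min_separator V E S"
  obtains a b where "a \<noteq> b" "S = {a, b}"
proof -
  have fin: "finite V"
    using assms(1) graph_finite by blast
  obtain v where v: "v \<in> V"
    using assms(2) unfolding k_connected_def by fastforce
  \<comment> \<open>Minimum degree 3 gives more than 3 vertices, so G fails to be 3-connected
    only through a separator of at most 2 vertices.\<close>
  have "3 \<le> card {u\<in>V. E v u}"
    using assms(4) v unfolding min_degree_ge_def by blast
  also have "\<dots> \<le> card (V - {v})"
    using fin graph_irrefl[OF assms(1)] by (intro card_mono) auto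
  finally have "3 < card V"
    using v fin by simp
  then obtain S' where S': "S' \<subseteq> V" "card S' < 3" "\<not> connected_on E (V - S')"
    using assms(3) unfolding k_connected_def by blast
  have "V - S' \<noteq> {}"
  proof
    assume "V - S' = {}"
    with S'(1) have "S' = V" by blast
    with S'(2) \<open>3 < card V\<close> show False by simp
  qed
  with S' have "separator V E S'"
    unfolding separator_def connected_on_def by blast
  then have "card S \<le> card S'"
    using assms(5) unfolding min_separator_def by blast
  moreover have "2 \<le> card S"
    using assms(5) two_connected_separator_card[OF assms(2)] unfolding min_separator_def by blast
  ultimately have "card S = 2"
    using S'(2) by linarith
  then obtain a b where "S = {a, b}" "a \<noteq> b"
    by (meson card_2_iff)
  with that show thesis by blast
qed

lemma PG_D:
  assumes "(S, K) \<in> PG V E"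
  shows "min_separator V E S" "separator V E S" "component E (V - S) K" "K \<subseteq> V - S"
  using assms unfolding PG_def min_separator_def component_def by auto

lemma PG_obtains_two_separator:
  assumes "graph V E" "k_connected V E 2" "\<not> k_connected V E 3" "min_degree_ge V E 3"
    and "(S, K) \<in> PG V E" "w \<in> K"
  obtains a b where "a \<noteq> b" "S = {a, b}" "separator V E {a, b}" "w \<in> V - {a, b}"
    and "K = component_of E (V - {a, b}) w"
proof -
  note PG = PG_D[OF assms(5)]
  obtain a b where "a \<noteq> b" "S = {a, b}"
    using min_separator_is_pair[OF assms(1-4) PG(1)] by blast
  moreover have "K = component_of E (V - S) w"
    using component_eq_component_of[OF assms(1) PG(3) assms(6)] .
  ultimately show thesis
    using that PG(2,4) assms(6) by blast
qed

lemma PG_component_of: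
  assumes "k_connected V E 2" "a \<noteq> b" "separator V E {a, b}" "x \<in> V - {a, b}"
  shows "({a, b}, component_of E (V - {a, b}) x) \<in> PG V E"
  unfolding PG_def using min_separator_if_two_separator[OF assms(1-3)] component_component_of[OF assms(4)]
  by blast

lemma two_connected_component_adjacent_to_separator:
  assumes "k_connected V E 2" "S \<subseteq> V" "z \<in> V - S" "x \<in> V" "x \<noteq> z" "s \<in> S - {x}"
  shows "\<exists>y\<in>component_of E (V - S - {x}) z. \<exists>s'\<in>S - {x}. E y s'"
proof (rule ccontr)
  define C where "C = component_of E (V - S - {x}) z"
  assume "\<not> ?thesis"
  then have no_edge: "\<And>y s'. y \<in> C \<Longrightarrow> s' \<in> S - {x} \<Longrightarrow> \<not> E y s'"
    unfolding C_def by blast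
  have "component_of E (V - {x}) z \<subseteq> C"
  proof (rule component_of_subset_if_closed)
    show "z \<in> C"
      unfolding C_def using assms(3-5) by (simp add: component_of_self)
    show "C \<subseteq> V - {x}"
      unfolding C_def using component_of_subset by fast
    fix y u assume "y \<in> C" "u \<in> V - {x}" "E y u"
    with no_edge have u: "u \<in> V - S - {x}" by blast
    from \<open>y \<in> C\<close> have "reach E (V - S - {x}) z y" "y \<in> V - S - {x}"
      unfolding C_def component_of_def by auto
    from reach_step[OF this(1) \<open>E y u\<close> this(2) u] u show "u \<in> C"
      unfolding C_def component_of_def by blast
  qed
  moreover have "s \<in> component_of E (V - {x}) z"
    using two_connected_remove_vertex[OF assms(1,4)] assms(2-6)
    unfolding connected_on_def component_of_def by auto
  moreover have "C \<subseteq> V - S"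
    unfolding C_def using component_of_subset by fast
  ultimately show False
    using assms(6) by blast
qed

lemma reach_from_outside_component:
  assumes "graph V E" "component E X K" "z \<notin> K" "reach E X z u"
  shows "u \<notin> K"
proof
  assume "u \<in> K"
  then have "K = component_of E X u"
    using component_eq_component_of[OF assms(1,2)] by blast
  moreover have "z \<in> X"
    using reach_endpoints[OF assms(4)] \<open>u \<in> K\<close> assms(2,3) unfolding component_def by blast
  ultimately show False
    using assms(3) reach_sym[OF assms(1,4)] unfolding component_of_def by blast
qed

lemma reach_separator_outside_component:
  assumes "graph V E" "k_connected V E 2" "S \<subseteq> V" "component E (V - S) K"
    and z: "z \<in> V - S - K" and x: "x \<in> V" "x \<noteq> z" and s: "s \<in> S - {x}"
  obtains s' where "s' \<in> S - {x}" "reach E (V - K - {x}) z s'"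
proof -
  define C where "C = component_of E (V - S - {x}) z"
  obtain y s' where y: "y \<in> C" and s': "s' \<in> S - {x}" "E y s'"
    using two_connected_component_adjacent_to_separator[OF assms(2,3) _ x s] z
    unfolding C_def by blast
  have C: "C \<subseteq> V - K - {x}"
  proof
    fix u assume "u \<in> C"
    then have "u \<in> V - S - {x}" "reach E (V - S) z u"
      unfolding C_def component_of_def by (auto elim: reach_mono)
    with reach_from_outside_component[OF assms(1,4)] z show "u \<in> V - K - {x}"
      by blast
  qed
  have "reach E (V - S - {x}) z y"
    using y unfolding C_def component_of_def by blast
  then have "reach E C z y"
    unfolding C_def by (rule reach_component_of)
  then have "reach E (V - K - {x}) z y"
    using C by (rule reach_mono)
  moreover have "s' \<in> V - K - {x}"
    using s' assms(3,4) unfolding component_def by blast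
  ultimately have "reach E (V - K - {x}) z s'"
    using reach_step[of E "V - K - {x}" z y s'] s'(2) y C by blast
  with s' that show thesis by blast
qed

lemma exists_vertex_outside_component:
  assumes "graph V E" "separator V E S" "component E (V - S) K"
  obtains r where "r \<in> V - S" "r \<notin> K"
proof -
  obtain u where u: "u \<in> V - S" "K = component_of E (V - S) u"
    using assms(3) unfolding component_def component_of_def by blast
  obtain r where "r \<in> V - S" "\<not> reach E (V - S) u r"
    using separator_obtains_unreachable[OF assms(1,2)] by blast
  with u that show thesis
    unfolding component_of_def by blast
qed

lemma component_has_other_vertex:
  assumes "graph V E" "min_degree_ge V E 3" "finite S" "card S \<le> 2" "component E (V - S) K" "c \<in> K"
  obtains z where "z \<in> K" "z \<noteq> c"
proof (rule ccontr)
  assume "\<not> thesis"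
  with that have K: "K \<subseteq> {c}" by blast
  have "K = component_of E (V - S) c"
    using component_eq_component_of[OF assms(1,5,6)] .
  then have c: "c \<in> V - S" and neighbours: "{u\<in>V. E c u} \<subseteq> S"
    using assms(6) K graph_irrefl[OF assms(1)] unfolding component_of_def
    by (auto intro: reach_edge)
  have "card {u\<in>V. E c u} \<le> card S"
    using card_mono[OF assms(3) neighbours] .
  with assms(2,4) c show False
    unfolding min_degree_ge_def by fastforce
qed

lemma reach_separator_avoiding_component:
  assumes "graph V E" "k_connected V E 2" "(S, K) \<in> PG V E" "S = {a, b}" "a \<noteq> b"
    and "w \<in> V - K" "s \<in> S"
  shows "reach E (V - K) w s"
proof -
  note PG = PG_D[OF assms(3)]
  have S: "S \<subseteq> V"
    using PG(2) unfolding separator_def by blast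
  have from_outside: "reach E (V - K) z s" if z: "z \<in> V - S - K" and s: "s \<in> S" for z s
  proof -
    obtain x where "S = {s, x}" "x \<noteq> s"
      using s assms(4,5) by (metis insertE insert_commute singletonD)
    then have x: "x \<in> V" "x \<noteq> z" "s \<in> S - {x}" "S - {x} = {s}"
      using S z by auto
    obtain s' where "s' \<in> S - {x}" "reach E (V - K - {x}) z s'"
      using reach_separator_outside_component[OF assms(1,2) S PG(3) z x(1-3)] by blast
    then have "reach E (V - K - {x}) z s"
      using x(4) by simp
    then show ?thesis
      by (rule reach_mono) blast
  qed
  obtain r where r: "r \<in> V - S - K"
    using exists_vertex_outside_component[OF assms(1) PG(2,3)] by blast
  show ?thesis
  proof (cases "w \<in> S")
    case True
    with from_outside[OF r] have "reach E (V - K) w r"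
      using reach_sym[OF assms(1)] by blast
    from this from_outside[OF r assms(7)] show ?thesis
      by (rule reach_trans)
  next
    case False
    with from_outside assms(6,7) show ?thesis by blast
  qed
qed

lemma smaller_component_if_two_separator_inside:
  assumes "graph V E" "k_connected V E 2" "(S, K) \<in> PG V E" "S = {a, b}" "a \<noteq> b"
    and "c \<in> K" "d \<in> K" "c \<noteq> d" "separator V E {c, d}"
  shows "\<exists>K'. ({c, d}, K') \<in> PG V E \<and> K' \<subset> K"
proof -
  have outside: "V - K \<subseteq> V - {c, d}"
    using assms(6,7) by blast
  have reach_a: "reach E (V - {c, d}) w a" if "w \<in> V - {c, d} - K" for w
  proof -
    have "reach E (V - K) w a"
      using reach_separator_avoiding_component[OF assms(1-5), of w a] that assms(4) by blast
    then show ?thesis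
      using outside by (rule reach_mono)
  qed
  have "a \<in> V - {c, d} - K"
    using PG_D(2,4)[OF assms(3)] assms(4,6,7) unfolding separator_def by blast
  then obtain u where u: "u \<in> V - {c, d}" "\<not> reach E (V - {c, d}) a u"
    using separator_obtains_unreachable[OF assms(1,9), of a] by blast
  then have not_ua: "\<not> reach E (V - {c, d}) u a"
    using reach_sym[OF assms(1), of "V - {c, d}" u a] by blast
  define K' where "K' = component_of E (V - {c, d}) u"
  have "({c, d}, K') \<in> PG V E"
    unfolding K'_def using PG_component_of[OF assms(2,8,9) u(1)] .
  moreover have "K' \<subseteq> K"
  proof
    fix v assume "v \<in> K'"
    then have v: "v \<in> V - {c, d}" "reach E (V - {c, d}) u v"
      unfolding K'_def component_of_def by auto
    show "v \<in> K"
    proof (rule ccontr)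
      assume "v \<notin> K"
      with v reach_a have "reach E (V - {c, d}) v a" by blast
      with v(2) not_ua show False
        using reach_trans by metis
    qed
  qed
  moreover have "c \<notin> K'"
    unfolding K'_def component_of_def by blast
  ultimately show ?thesis
    using assms(6) by blast
qed

lemma component_of_piece_eq:
  assumes "graph V E" "(S, K) \<in> PG V E" "S = {s, s'}" "c \<in> K" "z \<in> K - {c}"
    and avoids: "\<forall>y\<in>component_of E (K - {c}) z. \<not> E y s"
  shows "component_of E (K - {c}) z = component_of E (V - {s', c}) z"
proof
  note PG = PG_D[OF assms(2)]
  have K: "K = component_of E (V - S) c"
    using component_eq_component_of[OF assms(1) PG(3) assms(4)] .
  have piece: "K - {c} \<subseteq> V - {s', c}"
    using PG(4) assms(3) by blast
  show "component_of E (V - {s', c}) z \<subseteq> component_of E (K - {c}) z"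
  proof (rule component_of_subset_if_closed)
    show "z \<in> component_of E (K - {c}) z"
      using assms(5) by (rule component_of_self)
    show "component_of E (K - {c}) z \<subseteq> V - {s', c}"
      using component_of_subset piece by fast
    fix y u assume y: "y \<in> component_of E (K - {c}) z" and u: "u \<in> V - {s', c}" and "E y u"
    have "reach E (K - {c}) z y" "y \<in> K - {c}"
      using y unfolding component_of_def by auto
    moreover have "u \<noteq> s"
      using avoids y \<open>E y u\<close> by blast
    then have "u \<in> V - S"
      using u assms(3) by blast
    moreover from calculation have "reach E (V - S) c y"
      using K by (simp add: component_of_def)
    ultimately have "u \<in> K - {c}"
      using reach_step[of E "V - S" c y u] \<open>E y u\<close> u K PG(4) unfolding component_of_def by blast
    with reach_step[OF \<open>reach E (K - {c}) z y\<close> \<open>E y u\<close> \<open>y \<in> K - {c}\<close>]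
    show "u \<in> component_of E (K - {c}) z"
      unfolding component_of_def by blast
  qed
  show "component_of E (K - {c}) z \<subseteq> component_of E (V - {s', c}) z"
    unfolding component_of_def using piece reach_mono[OF _ piece] by blast
qed

lemma smaller_component_if_piece_avoids:
  assumes "graph V E" "k_connected V E 2" "(S, K) \<in> PG V E" "S = {s, s'}" "s \<noteq> s'"
    and "c \<in> K" "z \<in> K - {c}" and avoids: "\<forall>y\<in>component_of E (K - {c}) z. \<not> E y s"
  shows "\<exists>K'. ({s', c}, K') \<in> PG V E \<and> K' \<subset> K"
proof -
  note PG = PG_D[OF assms(3)]
  define P where "P = component_of E (K - {c}) z"
  have P: "P = component_of E (V - {s', c}) z"
    unfolding P_def using component_of_piece_eq[OF assms(1,3,4,6,7) avoids] .
  have PK: "P \<subseteq> K - {c}"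
    unfolding P_def by (rule component_of_subset)
  have s: "s \<in> V - {s', c}" "s' \<noteq> c"
    using PG(2,4) assms(4-6) unfolding separator_def by auto
  have z: "z \<in> V - {s', c}"
    using PG(4) assms(4,7) by auto
  have "s \<notin> P"
    using PK PG(4) assms(4) by blast
  then have "\<not> reach E (V - {s', c}) z s"
    using P s(1) unfolding component_of_def by blast
  moreover have "{s', c} \<subseteq> V"
    using PG(2,4) assms(4,6) unfolding separator_def by blast
  ultimately have "separator V E {s', c}"
    using s(1) z unfolding separator_def by blast
  then have "({s', c}, P) \<in> PG V E"
    using PG_component_of[OF assms(2) s(2)] z P by simp
  with PK assms(6) show ?thesis
    by blast
qed

lemma reach_separator_via_piece:
  assumes "(S, K) \<in> PG V E" "c \<in> K" "d \<notin> K" "s \<in> S - {d}"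
    and "y \<in> component_of E (K - {c}) z" "E y s"
  shows "reach E (V - {c, d}) z s"
proof -
  note PG = PG_D[OF assms(1)]
  have piece: "K - {c} \<subseteq> V - {c, d}"
    using PG(4) assms(3) by blast
  have "reach E (K - {c}) z y" "y \<in> K - {c}"
    using assms(5) unfolding component_of_def by auto
  then have "reach E (V - {c, d}) z y" "y \<in> V - {c, d}"
    using reach_mono[OF _ piece] piece by auto
  moreover have "s \<in> V - {c, d}"
    using assms(2,4) PG(2,4) unfolding separator_def by blast
  ultimately show ?thesis
    using reach_step[of E "V - {c, d}" z y s] assms(6) by blast
qed

lemma not_separator_if_pieces_attached:
  assumes "graph V E" "k_connected V E 2" "min_degree_ge V E 3" "(S, K) \<in> PG V E"
    and "S = {a, b}" "a \<noteq> b" "c \<in> K" "d \<notin> K"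
    and attached: "\<forall>z\<in>K - {c}. \<forall>s\<in>S. \<exists>y\<in>component_of E (K - {c}) z. E y s"
  shows "\<not> separator V E {c, d}"
proof
  assume sep: "separator V E {c, d}"
  note PG = PG_D[OF assms(4)]
  have S: "S \<subseteq> V"
    using PG(2) unfolding separator_def by blast
  have "finite S" "card S \<le> 2"
    using assms(5,6) by simp_all
  then obtain z1 where z1: "z1 \<in> K - {c}"
    using component_has_other_vertex[OF assms(1,3) _ _ PG(3) assms(7)] by blast
  obtain s0 where s0: "s0 \<in> S - {d}"
    using assms(5,6) by blast
  have to_S: "reach E (V - {c, d}) z s" if "z \<in> K - {c}" "s \<in> S - {d}" for z s
    using attached reach_separator_via_piece[OF assms(4,7,8) that(2)] that by blast
  have from_S: "reach E (V - {c, d}) s s0" if "s \<in> S - {d}" for s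
    using reach_trans[OF reach_sym[OF assms(1) to_S[OF z1 that]] to_S[OF z1 s0]] .
  have to_s0: "reach E (V - {c, d}) w s0" if w: "w \<in> V - {c, d}" for w
  proof -
    consider "w \<in> S" | "w \<in> K" | "w \<in> V - S - K"
      using w by blast
    then show ?thesis
    proof cases
      case 1
      with w from_S show ?thesis by blast
    next
      case 2
      with w to_S[of w s0] s0 show ?thesis by blast
    next
      case 3
      have "d \<in> V"
        using sep unfolding separator_def by blast
      then obtain s where s: "s \<in> S - {d}" "reach E (V - K - {d}) w s"
        using reach_separator_outside_component[OF assms(1,2) S PG(3) 3 _ _ s0] w by blast
      then have "reach E (V - {c, d}) w s"
        using assms(7) by (blast intro: reach_mono)
      from this from_S[OF s(1)] show ?thesis
        by (rule reach_trans)
    qed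
  qed
  obtain u v where "u \<in> V - {c, d}" "v \<in> V - {c, d}" "\<not> reach E (V - {c, d}) u v"
    using sep unfolding separator_def by blast
  then show False
    using reach_trans[OF to_s0 reach_sym[OF assms(1) to_s0]] by blast
qed

lemma not_P0_if_two_separator_vertex:
  assumes "graph V E" "k_connected V E 2" "\<not> k_connected V E 3" "min_degree_ge V E 3"
    and "(S, K) \<in> PG V E" "c \<in> K" "in_two_separator V E c"
  shows "(S, K) \<notin> P0 V E"
proof -
  obtain d where d: "d \<noteq> c" "separator V E {c, d}"
    using assms(7) unfolding in_two_separator_def by blast
  obtain a b where ab: "a \<noteq> b" "S = {a, b}"
    using min_separator_is_pair[OF assms(1-4) PG_D(1)[OF assms(5)]] by blast
  have "\<exists>S' K'. (S', K') \<in> PG V E \<and> K' \<subset> K"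
  proof (cases "d \<in> K")
    case True
    then show ?thesis
      using smaller_component_if_two_separator_inside[OF assms(1,2,5) ab(2,1) assms(6) True] d by blast
  next
    case d_outside: False
    show ?thesis
    proof (cases "\<exists>z\<in>K - {c}. \<exists>s\<in>S. \<forall>y\<in>component_of E (K - {c}) z. \<not> E y s")
      case True
      then obtain z s where z: "z \<in> K - {c}" "s \<in> S"
        and avoids: "\<forall>y\<in>component_of E (K - {c}) z. \<not> E y s"
        by blast
      define s' where "s' = (if s = a then b else a)"
      have "S = {s, s'}" "s \<noteq> s'"
        using ab z(2) unfolding s'_def by auto
      then show ?thesis
        using smaller_component_if_piece_avoids[OF assms(1,2,5) _ _ assms(6) z(1) avoids] by blast
    next
      case False
      then show ?thesis
        using not_separator_if_pieces_attached[OF assms(1,2,4,5) ab(2,1) assms(6) d_outside] d(2)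
        by blast
    qed
  qed
  then show ?thesis
    unfolding P0_def by force
qed

lemma P0_if_no_two_separator_vertex:
  assumes "graph V E" "k_connected V E 2" "\<not> k_connected V E 3" "min_degree_ge V E 3"
    and "(S, K) \<in> PG V E" and no_sep: "\<forall>y\<in>K. \<not> in_two_separator V E y"
  shows "(S, K) \<in> P0 V E"
proof (rule ccontr)
  assume "(S, K) \<notin> P0 V E"
  then obtain q where "q \<in> PG V E" "snd q \<subset> K"
    using assms(5) unfolding P0_def by auto
  then obtain S' K' where PG': "(S', K') \<in> PG V E" and "K' \<subset> K"
    by (metis prod.collapse)
  note PG = PG_D[OF assms(5)] and PG' = PG_D[OF PG']
  obtain c d where cd: "c \<noteq> d" "S' = {c, d}"
    using min_separator_is_pair[OF assms(1-4) PG'(1)] by blast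
  then have "in_two_separator V E c" "in_two_separator V E d"
    using PG'(2) unfolding in_two_separator_def by (auto simp: insert_commute)
  then have K: "K \<subseteq> V - S'"
    using no_sep cd(2) PG(4) by blast
  obtain u where "u \<in> V - S'" "K' = {v \<in> V - S'. reach E (V - S') u v}"
    using PG'(3) unfolding component_def by blast
  then have u: "u \<in> K'" by simp
  have "K \<subseteq> K'"
  proof
    fix v assume "v \<in> K"
    have K_u: "K = component_of E (V - S) u"
      using component_eq_component_of[OF assms(1) PG(3)] u \<open>K' \<subset> K\<close> by blast
    with \<open>v \<in> K\<close> have "reach E (V - S) u v"
      unfolding component_of_def by blast
    then have "reach E K u v"
      unfolding K_u by (rule reach_component_of)
    then have "reach E (V - S') u v"
      using K by (rule reach_mono)
    moreover have "K' = component_of E (V - S') u"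
      using component_eq_component_of[OF assms(1) PG'(3) u] .
    ultimately show "v \<in> K'"
      using \<open>v \<in> K\<close> K unfolding component_of_def by blast
  qed
  with \<open>K' \<subset> K\<close> show False
    by blast
qed

lemma P0_iff_no_two_separator_vertex:
  assumes "graph V E" "k_connected V E 2" "\<not> k_connected V E 3" "min_degree_ge V E 3"
    and "(S, K) \<in> PG V E"
  shows "(S, K) \<in> P0 V E \<longleftrightarrow> (\<forall>y\<in>K. \<not> in_two_separator V E y)"
  using not_P0_if_two_separator_vertex[OF assms] P0_if_no_two_separator_vertex[OF assms] by blast

lemma wl_equiv_replicate_obtains_matching_separator:
  assumes "graph V1 E1" "graph V2 E2" "3 \<le> k"
    and equiv: "wl_equiv k V1 E1 c1 V2 E2 c2 (replicate k x) (replicate k x')" and "x' \<in> V2"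
    and "a \<noteq> b" "separator V1 E1 {a, b}" "x \<in> V1 - {a, b}"
  obtains a' b' where "a' \<noteq> b'" "separator V2 E2 {a', b'}" "x' \<in> V2 - {a', b'}"
    and "\<And>y'. y' \<in> component_of E2 (V2 - {a', b'}) x' \<Longrightarrow> in_two_separator V2 E2 y' \<Longrightarrow>
      \<exists>y\<in>component_of E1 (V1 - {a, b}) x. in_two_separator V1 E1 y"
proof -
  have "a \<in> V1" "b \<in> V1"
    using assms(7) unfolding separator_def by auto
  moreover have "1 < k"
    using assms(3) by simp
  ultimately obtain a' b' where ab': "a' \<in> V2" "b' \<in> V2"
    and equiv_ab: "wl_equiv k V1 E1 c1 V2 E2 c2 ((replicate k x)[0 := a, 1 := b]) ((replicate k x')[0 := a', 1 := b'])"
    using wl_equiv_replicate_obtains_pair[OF graph_finite[OF assms(1)] graph_finite[OF assms(2)] _ equiv]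
    by blast
  note entries = wl_equiv_atomic_type(1)[OF equiv_ab]
  have "x' \<in> V2 - {a', b'}" "a' \<noteq> b'"
    using assms(3,5,6,8) entries[of 2 0] entries[of 2 1] entries[of 0 1] by auto
  moreover have "separator V2 E2 {a', b'}"
    using wl_equiv_separator[OF assms(1-3) equiv_ab] assms(3,5,7,8) ab' by simp
  moreover note wl_equiv_two_separator_vertex_in_component[OF assms(1-3) equiv_ab]
  ultimately show thesis
    using that assms(3,5,8) by simp
qed

theorem lemma17:
  fixes k :: nat
    and VG :: "'a set" and EG :: "'a \<Rightarrow> 'a \<Rightarrow> bool" and cG :: "'a \<Rightarrow> 'c"
    and VH :: "'b set" and EH :: "'b \<Rightarrow> 'b \<Rightarrow> bool" and cH :: "'b \<Rightarrow> 'c"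
  assumes "k \<ge> 3"
    and "graph VG EG" and "graph VH EH"
    and "k_connected VG EG 2" and "\<not> k_connected VG EG 3"
    and "k_connected VH EH 2" and "\<not> k_connected VH EH 3"
    and "min_degree_ge VG EG 3" and "min_degree_ge VH EH 3"
    and "v \<in> V_bot VG EG"
    and "w \<in> VH - V_bot VH EH"
  shows "\<not> wl_same_vertex_color k VG EG cG v VH EH cH w"
proof
  assume "wl_same_vertex_color k VG EG cG v VH EH cH w"
  then have equiv: "wl_equiv k VH EH cH VG EG cG (replicate k w) (replicate k v)"
    unfolding wl_same_vertex_color_def wl_equiv_def by metis
  obtain S K where SK: "(S, K) \<in> P0 VH EH" "w \<in> K"
    using assms(11) unfolding V_bot_def by auto
  then have PG: "(S, K) \<in> PG VH EH"
    unfolding P0_def by blast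
  obtain a b where H: "a \<noteq> b" "separator VH EH {a, b}" "w \<in> VH - {a, b}"
    and K: "K = component_of EH (VH - {a, b}) w"
    using PG_obtains_two_separator[OF assms(3,6,7,9) PG SK(2)] by blast
  have "v \<in> VG"
    using assms(10) unfolding V_bot_def by blast
  then obtain a' b' where G: "a' \<noteq> b'" "separator VG EG {a', b'}" "v \<in> VG - {a', b'}"
    and matched: "\<And>y'. y' \<in> component_of EG (VG - {a', b'}) v \<Longrightarrow> in_two_separator VG EG y' \<Longrightarrow>
      \<exists>y\<in>K. in_two_separator VH EH y"
    using wl_equiv_replicate_obtains_matching_separator[OF assms(3,2,1) equiv _ H] K by blast
  define K' where "K' = component_of EG (VG - {a', b'}) v"
  have "({a', b'}, K') \<in> PG VG EG"
    unfolding K'_def using PG_component_of[OF assms(4) G] .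
  moreover have "({a', b'}, K') \<notin> P0 VG EG"
    using assms(10) G(3) unfolding V_bot_def K'_def by (force intro: component_of_self)
  ultimately obtain y' where "y' \<in> K'" "in_two_separator VG EG y'"
    using P0_iff_no_two_separator_vertex[OF assms(2,4,5,8)] by blast
  with matched P0_iff_no_two_separator_vertex[OF assms(3,6,7,9) PG] SK(1) show False
    unfolding K'_def by blast
qed

end
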